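(* There are constants $C\in(0,\infty)$ and $c\in(0,1)$ such that for all $N,k\in\mathbb N$ and all $n\in\mathbb N$ with $n\le N$, $$\P(\tau^{(N)}_k=n)\le C\,k\,\P(T^{(N)}_1=n)\,\P(T^{(N)}_1\le n)^{k-1}\exp\Big(-\frac{ck}{\log n+1}\log^+\frac{ck}{\log n+1}\Big),$$ where $\log^+x:=\max(\log x,0)$.
   Context: Fix positive reals $r(n)$, $n\in\mathbb N$, with $r(n)=\frac an(1+o(1))$ as $n\to\infty$ for some $a\in(0,\infty)$; $R_N:=\sum_{n=1}^Nr(n)$. For each $N$, $(T^{(N)}_i)_{i\ge1}$ are i.i.d. with $\P(T^{(N)}_i=n)=\frac{r(n)}{R_N}\mathbf 1_{\{1,\dots,N\}}(n)$, and $\tau^{(N)}_k=\sum_{i=1}^kT^{(N)}_i$. *)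

theory Defs
  imports "HOL-Probability.Probability" "HOL-Library.Landau_Symbols"
begin

definition RN :: "(nat \<Rightarrow> real) \<Rightarrow> nat \<Rightarrow> real" where
  "RN r N = (\<Sum>n=1..N. r n)"

definition T_pmf :: "(nat \<Rightarrow> real) \<Rightarrow> nat \<Rightarrow> nat pmf" where
  "T_pmf r N = embed_pmf (\<lambda>n. if n \<in> {1..N} then r n / RN r N else 0)"

primrec tau_pmf :: "(nat \<Rightarrow> real) \<Rightarrow> nat \<Rightarrow> nat \<Rightarrow> nat pmf" where
  "tau_pmf r N 0 = return_pmf 0"
| "tau_pmf r N (Suc k) =
     bind_pmf (tau_pmf r N k) (\<lambda>s. map_pmf (\<lambda>t. s + t) (T_pmf r N))"

definition logplus :: "real \<Rightarrow> real" where
  "logplus x = max (ln x) 0"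

end

theory Submission
  imports Defs "HOL-Computational_Algebra.Polynomial"
begin

text \<open>
  The asymptotics give constants with A1 \<le> t r(t) \<le> A2 for all t \<ge> 1.
  P(tau_k = n) is the n-th coefficient of P^k, where P(z) = \<Sum>t\<le>n. P(T = t) z^t is the
  generating polynomial of T truncated at n. Differentiating P^k gives the size-bias identity
  n [z^n] P^k = k \<Sum>i. [z^i] P^(k-1) \<cdot> (n-i) [z^(n-i)] P, and since (n-i) P(T = n-i) \<le> A2 / R_N
  \<le> (A2/A1) n P(T = n), P(tau_k = n) is at most (A2/A1) k P(T = n) times the sum of the
  coefficients of P^(k-1) up to degree n. By Rankin's trick that sum is at most P(z)^(k-1) / z^n
  for every z \<in> (0,1]. For z = exp(-1/a) the weights t \<ge> a, which carry a fraction at least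
  A1 log(n/a) / (A2 (log n + 1)) of P(1), are damped by 1/e; hence
  P(z)^(k-1) \<le> P(1)^(k-1) exp(-y log(n/a)) with y = A1 (k-1) / (2 A2 (log n + 1)), while
  z^-n = exp(n/a). Choosing n/a between y/2 and y gives the factor exp(-x log x) with
  x = c k / (log n + 1), once x > 1; for x \<le> 1 the choice z = 1 suffices.
\<close>

lemma coeff_power_nonneg:
  fixes P :: "'a::linordered_semidom poly"
  assumes "\<And>i. 0 \<le> coeff P i"
  shows "0 \<le> coeff (P ^ k) m"
proof (induction k arbitrary: m)
  case (Suc k)
  show ?case unfolding power_Suc coeff_mult
    by (intro sum_nonneg mult_nonneg_nonneg assms Suc)
qed simp

lemma coeff_power_eq_0_below:
  fixes P :: "'a::comm_semiring_1 poly"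
  assumes "coeff P 0 = 0" and "m < k"
  shows "coeff (P ^ k) m = 0"
  using assms(2)
proof (induction k arbitrary: m)
  case (Suc k)
  have "coeff (P ^ k) i * coeff P (m - i) = 0" if "i \<le> m" for i
    using Suc that assms(1) by (cases "i < k") auto
  then show ?case
    by (simp only: power_Suc2 coeff_mult) (simp add: sum.neutral)
qed simp

lemma coeff_power_Suc_size_bias:
  fixes P :: "'a::{comm_semiring_1,semiring_no_zero_divisors} poly"
  assumes "1 \<le> n"
  shows "of_nat n * coeff (P ^ Suc j) n
       = of_nat (Suc j) * (\<Sum>i\<le>n-1. coeff (P ^ j) i * (of_nat (n - i) * coeff P (n - i)))"
proof -
  have "of_nat n * coeff (P ^ Suc j) n = coeff (pderiv (P ^ Suc j)) (n - 1)"
    using assms by (simp add: coeff_pderiv)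
  also have "\<dots> = of_nat (Suc j) * coeff (P ^ j * pderiv P) (n - 1)"
    by (simp only: pderiv_power_Suc mult_smult_left coeff_smult)
  also have "coeff (P ^ j * pderiv P) (n - 1)
           = (\<Sum>i\<le>n-1. coeff (P ^ j) i * (of_nat (n - i) * coeff P (n - i)))"
    unfolding coeff_mult
  proof (intro sum.cong refl)
    fix i assume "i \<in> {..n-1}"
    then have "Suc (n - 1 - i) = n - i" using assms by auto
    then show "coeff (P ^ j) i * coeff (pderiv P) (n - 1 - i)
             = coeff (P ^ j) i * (of_nat (n - i) * coeff P (n - i))"
      by (simp add: coeff_pderiv)
  qed
  finally show ?thesis .
qed

lemma coeff_power_size_bias_le:
  fixes P :: "real poly"
  assumes nonneg: "\<And>i. 0 \<le> coeff P i" and bound: "\<And>i. real i * coeff P i \<le> B" and "1 \<le> k"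
  shows "real n * coeff (P ^ k) n \<le> real k * B * (\<Sum>i\<le>n. coeff (P ^ (k - 1)) i)"
proof (cases "n = 0")
  case True
  have "0 \<le> B" using nonneg[of 1] bound[of 1] by simp
  then show ?thesis
    using True by (simp add: sum_nonneg coeff_power_nonneg nonneg)
next
  case False
  have "real n * coeff (P ^ k) n
      = real k * (\<Sum>i\<le>n-1. coeff (P ^ (k-1)) i * (real (n - i) * coeff P (n - i)))"
    using coeff_power_Suc_size_bias[of n P "k - 1"] False \<open>1 \<le> k\<close> by simp
  also have "\<dots> \<le> real k * (\<Sum>i\<le>n-1. coeff (P ^ (k-1)) i * B)"
    by (intro mult_left_mono sum_mono coeff_power_nonneg nonneg bound) auto
  also have "\<dots> = real k * B * (\<Sum>i\<le>n-1. coeff (P ^ (k-1)) i)"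
    by (simp add: sum_distrib_left mult_ac)
  also have "\<dots> \<le> real k * B * (\<Sum>i\<le>n. coeff (P ^ (k-1)) i)"
    using nonneg[of 1] bound[of 1]
    by (intro mult_left_mono sum_mono2 coeff_power_nonneg nonneg) auto
  finally show ?thesis .
qed

lemma sum_coeff_le_poly_div_power:
  fixes Q :: "real poly"
  assumes nonneg: "\<And>i. 0 \<le> coeff Q i" and z: "0 < z" "z \<le> 1"
  shows "(\<Sum>i\<le>n. coeff Q i) \<le> poly Q z / z ^ n"
proof -
  have "(\<Sum>i\<le>n. coeff Q i) * z ^ n \<le> (\<Sum>i\<le>n. coeff Q i * z ^ i)"
    unfolding sum_distrib_right
    by (intro sum_mono mult_left_mono nonneg power_decreasing) (use z in auto)
  also have "\<dots> = (\<Sum>i\<in>{..n} \<inter> {..degree Q}. coeff Q i * z ^ i)"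
    by (rule sum.mono_neutral_right) (auto simp: coeff_eq_0)
  also have "\<dots> \<le> (\<Sum>i\<le>degree Q. coeff Q i * z ^ i)"
    by (rule sum_mono2) (use nonneg z in auto)
  also have "\<dots> = poly Q z" by (simp add: poly_altdef)
  finally show ?thesis using z by (simp add: field_simps)
qed

lemma sum_inverse_le_ln_plus_one:
  "1 \<le> n \<Longrightarrow> (\<Sum>t=1..n. 1 / real t) \<le> ln (real n) + 1"
proof (induction n rule: dec_induct)
  case (step n)
  have "ln (real n / real (Suc n)) \<le> real n / real (Suc n) - 1"
    by (rule ln_le_minus_one) (use step in auto)
  also have "\<dots> = - 1 / real (Suc n)" by (simp add: field_simps)
  finally have "1 / real (Suc n) \<le> ln (real (Suc n)) - ln (real n)"
    using step by (simp add: ln_div)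
  then show ?case using step by simp
qed simp

lemma ln_div_le_sum_inverse:
  assumes "1 \<le> a" "a \<le> Suc n"
  shows "ln (real (Suc n) / real a) \<le> (\<Sum>t=a..n. 1 / real t)"
proof -
  have "ln (real (Suc n) / real a) = (\<Sum>t=a..n. ln (real t + 1) - ln (real t))"
    using sum_Suc_diff[OF assms(2), of "\<lambda>t. ln (real t)"] assms by (simp add: ln_div add_ac)
  also have "\<dots> \<le> (\<Sum>t=a..n. 1 / real t)"
    using assms by (intro sum_mono less_imp_le[OF ln_diff_le_inverse]) auto
  finally show ?thesis .
qed

lemma rankin_exponent_le:
  fixes x y \<sigma> :: real
  assumes x: "1 \<le> x" and y: "exp 3 * x \<le> y" and \<sigma>: "y / 2 \<le> \<sigma>" "\<sigma> \<le> y"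
  shows "\<sigma> - y * ln \<sigma> \<le> - x * ln x"
proof -
  have "x \<le> exp 3 * x" using x by simp
  then have xy: "x \<le> y" and ypos: "0 < y" using y x by linarith+
  have "ln y - ln 2 \<le> ln \<sigma>"
    using \<sigma> ypos ln_div[of y 2] ln_le_cancel_iff[of "y / 2" \<sigma>] by simp
  then have "\<sigma> - y * ln \<sigma> \<le> y * (1 + ln 2 - ln y)"
    using \<sigma> ypos mult_left_mono[of "ln y - ln 2" "ln \<sigma>" y] by (simp add: algebra_simps)
  also have "\<dots> \<le> y * (- ln x)"
  proof -
    have "3 + ln x \<le> ln y"
      using y x ypos ln_le_cancel_iff[of "exp 3 * x" y] by (simp add: ln_mult)
    then show ?thesis using ln_2_less_1 ypos by (intro mult_left_mono) auto
  qed
  also have "\<dots> \<le> x * (- ln x)"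
    using xy x by (intro mult_right_mono_neg) auto
  finally show ?thesis by simp
qed

lemma sum_exp_damped_le:
  fixes w :: "nat \<Rightarrow> real"
  assumes nonneg: "\<And>t. 1 \<le> t \<Longrightarrow> 0 \<le> w t" and a: "1 \<le> a" "a \<le> n"
  shows "(\<Sum>t\<in>{1..n}. w t * exp (- 1 / real a) ^ t)
       \<le> (\<Sum>t\<in>{1..n}. w t) - (1 - exp (-1)) * (\<Sum>t=a..n. w t)"
proof -
  have split: "{1..n} = {1..<a} \<union> {a..n}" and disjoint: "{1..<a} \<inter> {a..n} = {}"
    using a by auto
  have head: "(\<Sum>t\<in>{1..<a}. w t * exp (- 1 / real a) ^ t) \<le> (\<Sum>t\<in>{1..<a}. w t)"
    using nonneg by (intro sum_mono mult_left_le power_le_one) auto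
  have "exp (- 1 / real a) ^ t \<le> exp (-1)" if "a \<le> t" for t
  proof -
    have "exp (- 1 / real a) ^ t = exp (- (real t / real a))"
      by (simp flip: exp_of_nat_mult)
    also have "\<dots> \<le> exp (-1)" using that a by simp
    finally show ?thesis .
  qed
  then have tail: "(\<Sum>t\<in>{a..n}. w t * exp (- 1 / real a) ^ t) \<le> (\<Sum>t\<in>{a..n}. w t) * exp (-1)"
    unfolding sum_distrib_right using nonneg a by (intro sum_mono mult_left_mono) auto
  have split_sum: "sum f {1..n} = sum f {1..<a} + sum f {a..n}" for f :: "nat \<Rightarrow> real"
    unfolding split by (rule sum.union_disjoint[OF _ _ disjoint]) auto
  show ?thesis
    using head tail unfolding split_sum by (simp add: algebra_simps)
qed

lemma exists_nat_div_between:
  assumes "1 \<le> y" "y \<le> real n"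
  obtains a :: nat where "1 \<le> a" "a \<le> n" "y / 2 \<le> real n / real a" "real n / real a \<le> y"
proof
  define a where "a = nat \<lceil>real n / y\<rceil>"
  have ny: "1 \<le> real n / y" "real n / y \<le> real n" using assms by (auto simp: field_simps)
  have a: "real n / y \<le> real a" "real a < real n / y + 1"
    unfolding a_def using ny by linarith+
  show "1 \<le> a" using a ny by linarith
  show "a \<le> n" unfolding a_def using ny by (simp add: ceiling_le_iff nat_le_iff)
  show "real n / real a \<le> y" using a assms \<open>1 \<le> a\<close> by (simp add: field_simps)
  show "y / 2 \<le> real n / real a" using a ny assms \<open>1 \<le> a\<close> by (simp add: field_simps)
qed

definition gen_poly :: "(nat \<Rightarrow> real) \<Rightarrow> nat \<Rightarrow> real poly" where
  "gen_poly w n = (\<Sum>t\<in>{1..n}. monom (w t) t)"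

lemma coeff_gen_poly: "coeff (gen_poly w n) t = (if t \<in> {1..n} then w t else 0)"
  unfolding gen_poly_def coeff_sum coeff_monom by (simp add: sum.delta)

lemma poly_gen_poly: "poly (gen_poly w n) z = (\<Sum>t\<in>{1..n}. w t * z ^ t)"
  unfolding gen_poly_def by (simp add: poly_sum poly_monom)

lemma RN_pos:
  assumes r_pos: "\<And>n. 1 \<le> n \<Longrightarrow> 0 < r n" and N: "1 \<le> N"
  shows "0 < RN r N"
  unfolding RN_def using r_pos N by (intro sum_pos2[of _ 1]) (auto intro: less_imp_le)

lemma pmf_T_pmf:
  assumes r_pos: "\<And>n. 1 \<le> n \<Longrightarrow> 0 < r n" and N: "1 \<le> N"
  shows "pmf (T_pmf r N) t = (if t \<in> {1..N} then r t / RN r N else 0)"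
  unfolding T_pmf_def
proof (rule pmf_embed_pmf)
  have R: "0 < RN r N" using RN_pos[OF r_pos N] .
  show "0 \<le> (if x \<in> {1..N} then r x / RN r N else 0)" for x
    using R r_pos[of x] by auto
  have "(\<integral>\<^sup>+ x. ennreal (if x \<in> {1..N} then r x / RN r N else 0) \<partial>count_space UNIV)
      = (\<Sum>x\<in>{1..N}. ennreal (r x / RN r N))"
    by (subst nn_integral_count_space'[of "{1..N}"]) auto
  also have "\<dots> = ennreal (\<Sum>x\<in>{1..N}. r x / RN r N)"
    using R r_pos by (intro sum_ennreal) (auto intro: less_imp_le)
  also have "(\<Sum>x\<in>{1..N}. r x / RN r N) = 1"
    using R by (simp add: sum_divide_distrib[symmetric] RN_def)
  finally show "(\<integral>\<^sup>+ x. ennreal (if x \<in> {1..N} then r x / RN r N else 0) \<partial>count_space UNIV) = 1"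
    by simp
qed

lemma pmf_tau_pmf_Suc:
  "pmf (tau_pmf r N (Suc k)) m = (\<Sum>s\<le>m. pmf (tau_pmf r N k) s * pmf (T_pmf r N) (m - s))"
proof -
  have shift: "pmf (map_pmf (\<lambda>t. s + t) (T_pmf r N)) m
             = (if s \<le> m then pmf (T_pmf r N) (m - s) else 0)" for s
  proof -
    have "(\<lambda>t. s + t) -` {m} = (if s \<le> m then {m - s} else {})" by auto
    then show ?thesis by (simp add: pmf_map measure_pmf_single)
  qed
  have "pmf (tau_pmf r N (Suc k)) m
      = (\<integral>s. (if s \<le> m then pmf (T_pmf r N) (m - s) else 0) \<partial>measure_pmf (tau_pmf r N k))"
    by (simp add: pmf_bind shift)
  also have "\<dots> = (\<Sum>s\<le>m. (if s \<le> m then pmf (T_pmf r N) (m - s) else 0) * pmf (tau_pmf r N k) s)"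
    by (rule integral_measure_pmf_real) (auto split: if_splits)
  finally show ?thesis by (simp add: mult.commute)
qed

text \<open>Since \<open>T \<ge> 1\<close>, the law of \<open>\<tau>\<^sub>k\<close> on \<open>{0..n}\<close> only sees the weights up to \<open>n\<close>.\<close>
lemma pmf_tau_pmf_eq_coeff_gen_poly:
  assumes "\<And>n. 1 \<le> n \<Longrightarrow> 0 < r n" and "1 \<le> N" "n \<le> N" "m \<le> n"
  shows "pmf (tau_pmf r N k) m = coeff (gen_poly (\<lambda>t. r t / RN r N) n ^ k) m"
  using assms(4)
proof (induction k arbitrary: m)
  case (Suc k)
  have "pmf (tau_pmf r N (Suc k)) m = (\<Sum>s\<le>m. pmf (tau_pmf r N k) s * pmf (T_pmf r N) (m - s))"
    by (rule pmf_tau_pmf_Suc)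
  also have "\<dots> = (\<Sum>s\<le>m. coeff (gen_poly (\<lambda>t. r t / RN r N) n ^ k) s
                          * coeff (gen_poly (\<lambda>t. r t / RN r N) n) (m - s))"
    using Suc assms by (intro sum.cong refl) (auto simp: pmf_T_pmf coeff_gen_poly)
  also have "\<dots> = coeff (gen_poly (\<lambda>t. r t / RN r N) n ^ Suc k) m"
    by (simp only: power_Suc2 coeff_mult)
  finally show ?case .
qed (simp add: indicator_def)

lemma prob_T_pmf_atMost:
  assumes "\<And>n. 1 \<le> n \<Longrightarrow> 0 < r n" and "1 \<le> N" "n \<le> N"
  shows "measure_pmf.prob (T_pmf r N) {..n} = poly (gen_poly (\<lambda>t. r t / RN r N) n) 1"
proof -
  have "measure_pmf.prob (T_pmf r N) {..n} = (\<Sum>t\<le>n. pmf (T_pmf r N) t)"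
    by (rule measure_measure_pmf_finite) simp
  also have "\<dots> = (\<Sum>t\<le>n. coeff (gen_poly (\<lambda>t. r t / RN r N) n) t)"
    using assms by (intro sum.cong refl) (auto simp: pmf_T_pmf coeff_gen_poly)
  also have "\<dots> = (\<Sum>t\<in>{1..n}. r t / RN r N)"
    by (rule sum.mono_neutral_cong_right) (auto simp: coeff_gen_poly)
  also have "\<dots> = poly (gen_poly (\<lambda>t. r t / RN r N) n) 1"
    by (simp add: poly_gen_poly)
  finally show ?thesis .
qed

locale harmonic_weights =
  fixes w :: "nat \<Rightarrow> real" and A1 A2 :: real
  assumes A1_pos: "0 < A1"
    and weight_bounds: "\<And>t. 1 \<le> t \<Longrightarrow> A1 \<le> real t * w t \<and> real t * w t \<le> A2"
begin

lemma weight_pos: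
  assumes "1 \<le> t" shows "0 < w t"
proof -
  have "0 < real t * w t" using weight_bounds[OF assms] A1_pos by linarith
  then show ?thesis using assms by (simp add: zero_less_mult_iff)
qed

lemma A1_le_A2: "A1 \<le> A2"
  using weight_bounds[of 1] by simp

lemma A2_pos: "0 < A2"
  using A1_pos A1_le_A2 by simp

lemma coeff_gen_poly_nonneg: "0 \<le> coeff (gen_poly w n) t"
  using weight_pos[of t] by (auto simp: coeff_gen_poly)

lemma poly_gen_poly_one_pos: "1 \<le> n \<Longrightarrow> 0 < poly (gen_poly w n) 1"
  unfolding poly_gen_poly using weight_pos
  by (intro sum_pos2[of _ 1]) (auto intro: less_imp_le)

lemma poly_gen_poly_one_le: "1 \<le> n \<Longrightarrow> poly (gen_poly w n) 1 \<le> A2 * (ln (real n) + 1)"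
proof -
  assume n: "1 \<le> n"
  have "poly (gen_poly w n) 1 \<le> (\<Sum>t=1..n. A2 * (1 / real t))"
    unfolding poly_gen_poly using weight_bounds by (intro sum_mono) (auto simp: field_simps)
  also have "\<dots> \<le> A2 * (ln (real n) + 1)"
    unfolding sum_distrib_left[symmetric]
    using sum_inverse_le_ln_plus_one[OF n] A2_pos by (intro mult_left_mono) auto
  finally show ?thesis .
qed

lemma tail_weight_ge:
  assumes "1 \<le> a" "a \<le> n"
  shows "A1 * ln (real n / real a) \<le> (\<Sum>t=a..n. w t)"
proof -
  have "ln (real n / real a) \<le> ln (real (Suc n) / real a)"
    using assms by (simp add: divide_right_mono)
  also have "\<dots> \<le> (\<Sum>t=a..n. 1 / real t)"
    using assms by (intro ln_div_le_sum_inverse) auto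
  finally have "A1 * ln (real n / real a) \<le> (\<Sum>t=a..n. A1 * (1 / real t))"
    unfolding sum_distrib_left[symmetric] using A1_pos by (intro mult_left_mono) auto
  also have "\<dots> \<le> (\<Sum>t=a..n. w t)"
    using weight_bounds assms by (intro sum_mono) (auto simp: field_simps)
  finally show ?thesis .
qed

lemma poly_gen_poly_damped_le:
  assumes a: "1 \<le> a" "a \<le> n"
  shows "poly (gen_poly w n) (exp (- 1 / real a))
       \<le> poly (gen_poly w n) 1 * exp (- (A1 / (2 * A2) * ln (real n / real a) / (ln (real n) + 1)))"
proof -
  define F where "F = poly (gen_poly w n) 1"
  define L where "L = ln (real n) + 1"
  define u where "u = A1 / (2 * A2) * ln (real n / real a) / L"
  have "0 \<le> ln (real n)" using a by simp
  then have L: "0 < L" unfolding L_def by linarith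
  have ln_nonneg: "0 \<le> ln (real n / real a)" using a by simp
  have F: "0 \<le> F" "F \<le> A2 * L"
    unfolding F_def L_def using poly_gen_poly_one_pos poly_gen_poly_one_le a by (auto intro: less_imp_le)
  have "exp (-1) \<le> (1 / 2 :: real)"
    using exp_ge_add_one_self[of 1] by (simp add: exp_minus field_simps)
  then have "F * u \<le> (1 - exp (-1)) * (\<Sum>t=a..n. w t)"
  proof -
    have "F * u \<le> A2 * L * u"
      using F ln_nonneg A1_pos A2_pos L unfolding u_def by (intro mult_right_mono) auto
    also have "\<dots> = 1 / 2 * (A1 * ln (real n / real a))"
      unfolding u_def using A2_pos L by (simp add: field_simps)
    also have "\<dots> \<le> (1 - exp (-1)) * (\<Sum>t=a..n. w t)"
      using tail_weight_ge[OF a] \<open>exp (-1) \<le> 1 / 2\<close> ln_nonneg A1_pos by (intro mult_mono) auto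
    finally show ?thesis .
  qed
  then have "poly (gen_poly w n) (exp (- 1 / real a)) \<le> F * (1 - u)"
    using sum_exp_damped_le[OF _ a, of w] weight_pos
    unfolding poly_gen_poly F_def by (force simp: algebra_simps intro: less_imp_le)
  also have "\<dots> \<le> F * exp (- u)"
    using F exp_ge_add_one_self[of "- u"] by (intro mult_left_mono) auto
  finally show ?thesis unfolding F_def u_def L_def .
qed


lemma sum_coeff_power_gen_poly_le_large:
  assumes n: "1 \<le> n" and j: "j \<le> n" and x: "1 < x"
    and xj: "exp 3 * x \<le> A1 / (2 * A2) * real j / (ln (real n) + 1)"
  shows "(\<Sum>i\<le>n. coeff (gen_poly w n ^ j) i) \<le> poly (gen_poly w n) 1 ^ j * exp (- x * ln x)"
proof -
  define P where "P = gen_poly w n"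
  define F where "F = poly P 1"
  define L where "L = ln (real n) + 1"
  define y where "y = A1 / (2 * A2) * real j / L"
  have L: "1 \<le> L" unfolding L_def using n by simp
  have "x \<le> exp 3 * x" using x by simp
  then have y1: "1 \<le> y" using x xj unfolding y_def L_def by linarith
  have "y \<le> A1 / (2 * A2) * real j"
    unfolding y_def using L A1_pos A2_pos mult_left_mono[of 1 L "real j"]
    by (simp add: divide_le_eq mult_le_cancel_left_pos)
  also have "\<dots> \<le> 1 / 2 * real j"
    using A1_le_A2 A2_pos by (intro mult_right_mono) (auto simp: field_simps)
  also have "\<dots> \<le> real n" using j by simp
  finally obtain a where a: "1 \<le> a" "a \<le> n"
    and \<sigma>: "y / 2 \<le> real n / real a" "real n / real a \<le> y"
    using exists_nat_div_between[OF y1] by blast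
  define \<sigma> where "\<sigma> = real n / real a"
  define z where "z = exp (- 1 / real a)"
  define u where "u = A1 / (2 * A2) * ln \<sigma> / L"
  have z: "0 < z" "z \<le> 1" unfolding z_def using a by auto
  have zn: "z ^ n = exp (- \<sigma>)"
    unfolding z_def \<sigma>_def by (simp flip: exp_of_nat_mult)
  have Pz: "0 \<le> poly P z"
    unfolding P_def poly_gen_poly using weight_pos z by (intro sum_nonneg) (auto intro: less_imp_le)
  have F: "0 \<le> F"
    unfolding F_def P_def using poly_gen_poly_one_pos[OF n] by simp
  have ju: "real j * u = y * ln \<sigma>" unfolding u_def y_def by simp
  have "(\<Sum>i\<le>n. coeff (P ^ j) i) \<le> poly (P ^ j) z / z ^ n"
    unfolding P_def by (intro sum_coeff_le_poly_div_power coeff_power_nonneg coeff_gen_poly_nonneg z)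
  also have "\<dots> = poly P z ^ j * exp \<sigma>"
    by (simp add: poly_power zn exp_minus divide_inverse)
  also have "\<dots> \<le> (F * exp (- u)) ^ j * exp \<sigma>"
    using poly_gen_poly_damped_le[OF a] Pz
    unfolding P_def F_def u_def \<sigma>_def z_def L_def by (intro mult_right_mono power_mono) auto
  also have "\<dots> = F ^ j * exp (\<sigma> - y * ln \<sigma>)"
    by (simp add: power_mult_distrib ju flip: exp_of_nat_mult exp_add)
  also have "\<dots> \<le> F ^ j * exp (- x * ln x)"
    using rankin_exponent_le[of x y \<sigma>] x xj \<sigma> F
    unfolding \<sigma>_def y_def L_def by (intro mult_left_mono) auto
  finally show ?thesis unfolding P_def F_def .
qed

lemma sum_coeff_power_gen_poly_le:
  assumes k: "1 \<le> k" "k \<le> n"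
  defines "x \<equiv> A1 / (4 * A2 * exp 3) * real k / (ln (real n) + 1)"
  shows "(\<Sum>i\<le>n. coeff (gen_poly w n ^ (k - 1)) i)
       \<le> poly (gen_poly w n) 1 ^ (k - 1) * exp (- x * logplus x)"
proof -
  have L: "1 \<le> ln (real n) + 1" using k by simp
  have e3x: "exp 3 * x = A1 / (2 * A2) * (real k / 2) / (ln (real n) + 1)"
    unfolding x_def by simp
  show ?thesis
  proof (cases "x \<le> 1")
    case True
    have "0 < x" unfolding x_def using k A1_pos A2_pos by (intro divide_pos_pos mult_pos_pos add_nonneg_pos) auto
    then have "logplus x = 0" using True by (simp add: logplus_def)
    moreover have "(\<Sum>i\<le>n. coeff (gen_poly w n ^ (k - 1)) i) \<le> poly (gen_poly w n ^ (k - 1)) 1 / 1 ^ n"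
      by (intro sum_coeff_le_poly_div_power coeff_power_nonneg coeff_gen_poly_nonneg) auto
    ultimately show ?thesis by (simp add: poly_power)
  next
    case False
    have "x \<le> exp 3 * x" using False by simp
    have k2: "2 \<le> k"
    proof (rule ccontr)
      assume "\<not> 2 \<le> k"
      then have "k = 1" using k by simp
      then have "exp 3 * x \<le> A1 / (2 * A2) * (1 / 2)"
        using divide_left_mono[OF L, of "A1 / (2 * A2) * (1 / 2)"] L A1_pos A2_pos
        unfolding e3x by simp
      also have "\<dots> < 1" using A1_le_A2 A2_pos by (simp add: field_simps)
      finally show False using \<open>x \<le> exp 3 * x\<close> False by linarith
    qed
    have "exp 3 * x \<le> A1 / (2 * A2) * real (k - 1) / (ln (real n) + 1)"
      unfolding e3x using k2 L A1_pos A2_pos by (intro divide_right_mono mult_left_mono) auto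
    then show ?thesis
      using sum_coeff_power_gen_poly_le_large[of n "k - 1" x] k False
      by (simp add: logplus_def)
  qed
qed

lemma coeff_power_gen_poly_le:
  assumes k: "1 \<le> k" and n: "1 \<le> n"
  defines "x \<equiv> A1 / (4 * A2 * exp 3) * real k / (ln (real n) + 1)"
  shows "coeff (gen_poly w n ^ k) n
       \<le> A2 / A1 * real k * w n * poly (gen_poly w n) 1 ^ (k - 1) * exp (- x * logplus x)"
proof (cases "n < k")
  case True
  have "coeff (gen_poly w n ^ k) n = 0"
    using True by (intro coeff_power_eq_0_below) (simp add: coeff_gen_poly)
  moreover have "0 \<le> poly (gen_poly w n) 1" using poly_gen_poly_one_pos[OF n] by simp
  ultimately show ?thesis
    using A1_pos A2_pos weight_pos[OF n] by simp
next
  case False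
  define P where "P = gen_poly w n"
  define F where "F = poly P 1"
  define E where "E = exp (- x * logplus x)"
  have FE: "0 \<le> F ^ (k - 1) * E"
    unfolding F_def P_def E_def using poly_gen_poly_one_pos[OF n] by simp
  have bound: "real i * coeff P i \<le> A2" for i
    unfolding P_def coeff_gen_poly using weight_bounds A2_pos by auto
  have "real n * coeff (P ^ k) n \<le> real k * A2 * (\<Sum>i\<le>n. coeff (P ^ (k - 1)) i)"
    unfolding P_def using bound k by (intro coeff_power_size_bias_le coeff_gen_poly_nonneg) (auto simp: P_def)
  also have "\<dots> \<le> real k * A2 * (F ^ (k - 1) * E)"
    unfolding P_def F_def E_def x_def using False k A2_pos
    by (intro mult_left_mono sum_coeff_power_gen_poly_le) auto
  also have "\<dots> \<le> real k * (A2 / A1 * (real n * w n)) * (F ^ (k - 1) * E)"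
    using weight_bounds[OF n] A1_pos A2_pos FE by (intro mult_right_mono mult_left_mono) (auto simp: field_simps)
  also have "\<dots> = real n * (A2 / A1 * real k * w n * F ^ (k - 1) * E)"
    by (simp add: mult_ac)
  finally show ?thesis
    using n unfolding P_def F_def E_def by (subst (asm) mult_le_cancel_left_pos) auto
qed

lemma harmonic_weights_divide:
  assumes "0 < R"
  shows "harmonic_weights (\<lambda>t. w t / R) (A1 / R) (A2 / R)"
proof
  show "0 < A1 / R" using A1_pos assms by simp
  show "A1 / R \<le> real t * (w t / R) \<and> real t * (w t / R) \<le> A2 / R" if "1 \<le> t" for t
    using weight_bounds[OF that] assms by (simp add: divide_right_mono)
qed

lemma pmf_tau_pmf_le:
  assumes k: "1 \<le> k" and n: "1 \<le> n" "n \<le> N"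
  defines "c \<equiv> A1 / (4 * A2 * exp 3)"
  shows "pmf (tau_pmf w N k) n
       \<le> A2 / A1 * real k * pmf (T_pmf w N) n * (measure_pmf.prob (T_pmf w N) {..n}) ^ (k - 1)
          * exp (- (c * real k / (ln (real n) + 1)) * logplus (c * real k / (ln (real n) + 1)))"
proof -
  define R where "R = RN w N"
  have N: "1 \<le> N" using n by simp
  have R: "0 < R" unfolding R_def using RN_pos[OF weight_pos N] .
  interpret scaled: harmonic_weights "\<lambda>t. w t / R" "A1 / R" "A2 / R"
    using harmonic_weights_divide[OF R] .
  have constants: "A2 / R / (A1 / R) = A2 / A1" "A1 / R / (4 * (A2 / R) * exp 3) = c"
    unfolding c_def using R by simp_all
  have "pmf (tau_pmf w N k) n = coeff (gen_poly (\<lambda>t. w t / R) n ^ k) n"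
    unfolding R_def using n by (intro pmf_tau_pmf_eq_coeff_gen_poly weight_pos N) auto
  moreover have "pmf (T_pmf w N) n = w n / R"
    unfolding R_def using n by (simp add: pmf_T_pmf[OF weight_pos N])
  moreover have "measure_pmf.prob (T_pmf w N) {..n} = poly (gen_poly (\<lambda>t. w t / R) n) 1"
    unfolding R_def using n by (intro prob_T_pmf_atMost weight_pos N)
  ultimately show ?thesis
    using scaled.coeff_power_gen_poly_le[OF k n(1)] unfolding constants by simp
qed

end

lemma asymp_equiv_inverse_imp_harmonic_weights:
  fixes r :: "nat \<Rightarrow> real"
  assumes a: "0 < a" and r_pos: "\<And>n. 1 \<le> n \<Longrightarrow> 0 < r n"
    and r_asymp: "r \<sim>[at_top] (\<lambda>n. a / real n)"
  shows "\<exists>A1 A2. harmonic_weights r A1 A2"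
proof -
  define f where "f t = real t * r t" for t
  have "(\<lambda>n. real n * (a / real n)) \<sim>[at_top] f"
    unfolding f_def by (intro asymp_equiv_mult asymp_equiv_refl asymp_equiv_symI[OF r_asymp])
  moreover have "((\<lambda>n. real n * (a / real n)) \<longlongrightarrow> a) at_top"
    by (rule tendsto_eventually) (use eventually_gt_at_top[of 0] in eventually_elim, simp)
  ultimately have "(f \<longlongrightarrow> a) at_top"
    by (rule asymp_equiv_tendsto_transfer)
  then have "eventually (\<lambda>t. a / 2 < f t \<and> f t < 2 * a) at_top"
    using a by (intro eventually_conj order_tendstoD) auto
  then obtain t0 where t0: "\<And>t. t0 \<le> t \<Longrightarrow> a / 2 < f t \<and> f t < 2 * a"
    by (auto simp: eventually_at_top_linorder)
  define A1 where "A1 = Min (insert (a / 2) (f ` {1..t0}))"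
  define A2 where "A2 = Max (insert (2 * a) (f ` {1..t0}))"
  have "harmonic_weights r A1 A2"
  proof
    show "0 < A1"
      unfolding A1_def f_def using a r_pos by (subst Min_gr_iff) auto
    show "A1 \<le> real t * r t \<and> real t * r t \<le> A2" if "1 \<le> t" for t
      unfolding f_def[symmetric]
    proof (cases "t \<le> t0")
      case True
      then have "f t \<in> insert (a / 2) (f ` {1..t0})" "f t \<in> insert (2 * a) (f ` {1..t0})"
        using that by auto
      then show "A1 \<le> f t \<and> f t \<le> A2" unfolding A1_def A2_def by (auto intro: Min_le Max_ge)
    next
      case False
      have "A1 \<le> a / 2" "2 * a \<le> A2" unfolding A1_def A2_def by (intro Min_le Max_ge; simp)+
      then show "A1 \<le> f t \<and> f t \<le> A2" using t0[of t] False by auto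
    qed
  qed
  then show ?thesis by blast
qed

theorem mainTheorem4:
  fixes r :: "nat \<Rightarrow> real" and a :: real
  assumes a_pos: "0 < a"
    and r_pos: "\<And>n. n \<ge> 1 \<Longrightarrow> 0 < r n"
    and r_asymp: "r \<sim>[at_top] (\<lambda>n. a / real n)"
  shows "\<exists>C::real. \<exists>c::real. 0 < C \<and> 0 < c \<and> c < 1 \<and>
    (\<forall>N k n. 1 \<le> N \<longrightarrow> 1 \<le> k \<longrightarrow> 1 \<le> n \<longrightarrow> n \<le> N \<longrightarrow>
       pmf (tau_pmf r N k) n
         \<le> C * real k * pmf (T_pmf r N) n
             * (measure_pmf.prob (T_pmf r N) {..n}) ^ (k - 1)
             * exp (- (c * real k / (ln (real n) + 1))
                    * logplus (c * real k / (ln (real n) + 1))))"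
proof -
  obtain A1 A2 where "harmonic_weights r A1 A2"
    using asymp_equiv_inverse_imp_harmonic_weights[OF a_pos r_pos r_asymp] by blast
  then interpret harmonic_weights r A1 A2 .
  have "A2 \<le> A2 * exp 3"
    using A2_pos mult_left_mono[of 1 "exp 3" A2] by simp
  then have "A1 \<le> A2 * exp 3"
    using A1_le_A2 by linarith
  then have "A1 / (4 * A2 * exp 3) \<le> 1 / 4"
    using A2_pos by (simp add: field_simps)
  then have c: "0 < A1 / (4 * A2 * exp 3)" "A1 / (4 * A2 * exp 3) < 1"
    using A1_pos A2_pos by simp_all
  show ?thesis
    using A1_pos A2_pos c pmf_tau_pmf_le
    by (intro exI[of _ "A2 / A1"] exI[of _ "A1 / (4 * A2 * exp 3)"]) auto
qed

end
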